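(* The formal power series $\mathcal{E}_1(x)=\sum_{n=1}^{\infty}e(n)x^n\in\mathbb{Z}[[x]]$ satisfies $$\mathcal{E}_1(x)=\mathcal{E}_1(x^2)+\frac{x^2+1}{x}\,\mathcal{E}_1(x^4)+\frac{x^2}{1-x}.$$
   Context: The Stern polynomials $B_n(t)\in\mathbb{Z}[t]$ are defined by $B_0(t)=0$, $B_1(t)=1$, and for $n\geq 1$: $B_{2n}(t)=tB_n(t)$, $B_{2n+1}(t)=B_n(t)+B_{n+1}(t)$. For $n\geq1$ let $e(n)=\deg B_n(t)$. *)

theory Defs
  imports "HOL-Computational_Algebra.Computational_Algebra"
begin

function stern_poly :: "nat \<Rightarrow> int poly" where
  "stern_poly n =
     (if n = 0 then 0
      else if n = 1 then 1
      else if even n then [:0, 1:] * stern_poly (n div 2)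
      else stern_poly (n div 2) + stern_poly (n div 2 + 1))"
  by auto
termination
  by (relation "measure id") (auto elim!: oddE)

declare stern_poly.simps [simp del]

text \<open>e(n) = deg B_n(t), used for n >= 1.\<close>
definition e :: "nat \<Rightarrow> nat" where
  "e n = degree (stern_poly n)"

text \<open>E_1(x) = sum_{n>=1} e(n) x^n, viewed in Q[[x]] (coefficients are integers).\<close>
definition E1 :: "rat fps" where
  "E1 = Abs_fps (\<lambda>n. if n = 0 then 0 else of_nat (e n))"

end

theory Submission
  imports Defs
begin

(* Since B_{2n} = t B_n, and B_{2n+1} = B_n + B_{n+1} is a sum of two
   nonzero polynomials with nonnegative coefficients (so no leading terms cancel), the
   degrees satisfy  e(2n) = e(n) + 1  and  e(2n+1) = max (e n) (e (n+1)).  From these,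
   consecutive values of e differ by at most one, which resolves the maximum in the
   odd case modulo 4:  e(4k+1) = e(k) + 1  and  e(4k+3) = e(k+1) + 1.
   Comparing coefficients of x^m in the claimed identity, the right-hand side
   contributes e(m/2) for even m, e((m+1)/4) and e((m-1)/4) when these are integers,
   and 1 for m >= 2; splitting m modulo 4 this is exactly one of the recurrences above. *)

text \<open>The defining recursion, stated for n \<ge> 1 (odd arguments and 1 are written with
  Suc, the form in which they appear after simplification).\<close>

lemma stern_poly_1: "stern_poly (Suc 0) = 1"
  by (simp add: stern_poly.simps)

lemma stern_poly_even: "n \<ge> 1 \<Longrightarrow> stern_poly (2 * n) = pCons 0 (stern_poly n)"
  by (subst stern_poly.simps) simp

lemma stern_poly_odd:
  "n \<ge> 1 \<Longrightarrow> stern_poly (Suc (2 * n)) = stern_poly n + stern_poly (Suc n)"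
  by (subst stern_poly.simps) simp

lemma lead_coeff_pos_if_nonneg_coeffs:
  fixes p :: "'a::linordered_idom poly"
  assumes "p \<noteq> 0" "\<forall>i. coeff p i \<ge> 0"
  shows "coeff p (degree p) > 0"
  using assms leading_coeff_neq_0[of p] by (metis order_le_neq_trans)

text \<open>For nonzero polynomials with nonnegative coefficients the leading terms of a sum
  cannot cancel, so the degree of the sum is the larger degree.\<close>

lemma degree_add_nonneg_coeffs:
  fixes p q :: "'a::linordered_idom poly"
  assumes "p \<noteq> 0" "q \<noteq> 0" "\<forall>i. coeff p i \<ge> 0" "\<forall>i. coeff q i \<ge> 0"
  shows "degree (p + q) = max (degree p) (degree q)"
proof -
  have "coeff (p + q) (degree p) > 0"
    using lead_coeff_pos_if_nonneg_coeffs[of p] assms by (simp add: add_pos_nonneg)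
  moreover have "coeff (p + q) (degree q) > 0"
    using lead_coeff_pos_if_nonneg_coeffs[of q] assms by (simp add: add_nonneg_pos)
  ultimately have "degree p \<le> degree (p + q)" "degree q \<le> degree (p + q)"
    by (auto intro: le_degree)
  then show ?thesis
    using degree_add_le_max[of p q] by simp
qed

lemma nat_pos_parity_cases:
  fixes n :: nat
  assumes "n \<ge> 1"
  obtains "n = 1" | k where "n = 2 * k" "k \<ge> 1" | k where "n = 2 * k + 1" "k \<ge> 1"
proof -
  have "n = 1 \<or> (\<exists>k\<ge>1. n = 2 * k) \<or> (\<exists>k\<ge>1. n = 2 * k + 1)"
    using assms by presburger
  then show ?thesis
    using that by blast
qed

lemma stern_poly_nonzero_nonneg:
  "n \<ge> 1 \<Longrightarrow> stern_poly n \<noteq> 0 \<and> (\<forall>i. coeff (stern_poly n) i \<ge> 0)"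
proof (induction n rule: less_induct)
  case (less n)
  from less.prems show ?case
  proof (cases rule: nat_pos_parity_cases)
    case 1
    then show ?thesis
      by (simp add: stern_poly_1)
  next
    case (2 k)
    then show ?thesis
      using less.IH[of k] by (auto simp: stern_poly_even coeff_pCons split: nat.splits)
  next
    case (3 k)
    define p q where "p = stern_poly k" and "q = stern_poly (Suc k)"
    have p: "p \<noteq> 0" "\<forall>i. coeff p i \<ge> 0" and q: "q \<noteq> 0" "\<forall>i. coeff q i \<ge> 0"
      using 3 less.IH[of k] less.IH[of "k + 1"] by (auto simp: p_def q_def)
    have "coeff (p + q) (degree p) > 0"
      using lead_coeff_pos_if_nonneg_coeffs[OF p] q by (simp add: add_pos_nonneg)
    then have "p + q \<noteq> 0"
      by (metis coeff_0 less_irrefl)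
    then show ?thesis
      using 3 p q by (simp add: stern_poly_odd p_def q_def add_nonneg_nonneg)
  qed
qed

lemma e_1: "e (Suc 0) = 0"
  by (simp add: e_def stern_poly_1)

lemma e_even: "n \<ge> 1 \<Longrightarrow> e (2 * n) = e n + 1"
  using stern_poly_nonzero_nonneg[of n] by (simp add: e_def stern_poly_even)

lemma e_odd: "n \<ge> 1 \<Longrightarrow> e (Suc (2 * n)) = max (e n) (e (Suc n))"
  using stern_poly_nonzero_nonneg[of n] stern_poly_nonzero_nonneg[of "Suc n"]
  by (simp add: e_def stern_poly_odd degree_add_nonneg_coeffs)

lemma e_consecutive: "n \<ge> 1 \<Longrightarrow> e (n + 1) \<le> e n + 1 \<and> e n \<le> e (n + 1) + 1"
proof (induction n rule: less_induct)
  case (less n)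
  from less.prems show ?case
  proof (cases rule: nat_pos_parity_cases)
    case 1
    then show ?thesis
      using e_1 e_even[of 1] by (simp add: numeral_eq_Suc)
  next
    case (2 k)
    then show ?thesis
      using less.IH[of k] e_even[of k] e_odd[of k] by auto
  next
    case (3 k)
    have "2 * k + 1 + 1 = 2 * (k + 1)" by simp
    then show ?thesis
      using 3 less.IH[of k] e_even[of "k + 1"] e_odd[of k] by auto
  qed
qed

text \<open>Modulo 4, the maximum in the odd recurrence is resolved by the previous lemma.\<close>

lemma e_4k_plus_1: "k \<ge> 1 \<Longrightarrow> e (4 * k + 1) = e k + 1"
  using e_odd[of "2 * k"] e_even[of k] e_odd[of k] e_consecutive[of k]
  by (auto simp: mult.assoc)

lemma e_4k_plus_3: "e (4 * k + 3) = e (k + 1) + 1"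
proof (cases "k = 0")
  case True
  then show ?thesis
    using e_odd[of 1] e_1 e_even[of 1] by (simp add: numeral_eq_Suc)
next
  case False
  have odd_split: "4 * k + 3 = Suc (2 * (2 * k + 1))"
    by simp
  show ?thesis
    unfolding odd_split
    using False e_odd[of "2 * k + 1"] e_even[of "k + 1"] e_odd[of k] e_consecutive[of k]
    by auto
qed

lemma fps_compose_X_power_nth:
  fixes a :: "'a::comm_ring_1 fps"
  assumes "k > 0"
  shows "(a oo fps_X ^ k) $ n = (if k dvd n then a $ (n div k) else 0)"
proof -
  have "(a oo fps_X ^ k) $ n = (\<Sum>i\<in>{0..n}. if i = n div k \<and> k dvd n then a $ i else 0)"
    using assms by (auto simp: fps_compose_nth power_mult [symmetric] intro!: sum.cong)
  also have "\<dots> = (if k dvd n then a $ (n div k) else 0)"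
    by simp
  finally show ?thesis .
qed

lemma fps_X_power_div_one_minus_X_nth:
  "(fps_X ^ k / (1 - fps_X) :: 'a::field fps) $ n = (if k \<le> n then 1 else 0)"
  by (simp add: fps_divide_unit fps_inverse_gp' [symmetric] fps_X_power_mult_nth)

lemma E1_nth: "E1 $ n = (if n = 0 then 0 else of_nat (e n))"
  by (simp add: E1_def)

lemma functional_equation_rhs_nth:
  "((E1 oo fps_X ^ 2) + (fps_X ^ 2 + 1) * ((E1 oo fps_X ^ 4) / fps_X)
      + fps_X ^ 2 / (1 - fps_X)) $ m =
   (if even m then E1 $ (m div 2) else 0)
   + (if 4 dvd (m + 1) then E1 $ ((m + 1) div 4) else 0)
   + (if 2 \<le> m then (if 4 dvd (m - 1) then E1 $ ((m - 1) div 4) else 0) + 1 else 0)"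
proof -
  have "m - 2 + 1 = m - 1" if "2 \<le> m" using that by simp
  then show ?thesis
    by (simp add: distrib_right fps_X_power_mult_nth fps_compose_X_power_nth
        fps_X_power_div_one_minus_X_nth)
qed

lemma E1_coefficient_recurrence:
  "E1 $ m =
   (if even m then E1 $ (m div 2) else 0)
   + (if 4 dvd (m + 1) then E1 $ ((m + 1) div 4) else 0)
   + (if 2 \<le> m then (if 4 dvd (m - 1) then E1 $ ((m - 1) div 4) else 0) + 1 else 0)"
proof -
  define k where "k = m div 4"
  then have "m = 4 * k \<or> m = 4 * k + 1 \<or> m = 4 * k + 2 \<or> m = 4 * k + 3"
    by presburger
  then have "m = 0 \<or> m = 1 \<or> (m = 4 * k \<and> k \<ge> 1) \<or> (m = 4 * k + 1 \<and> k \<ge> 1)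
      \<or> m = 4 * k + 2 \<or> m = 4 * k + 3"
    by auto
  then consider "m = 0" | "m = 1" | "m = 4 * k" "k \<ge> 1" | "m = 4 * k + 1" "k \<ge> 1"
    | "m = 4 * k + 2" | "m = 4 * k + 3"
    by blast
  then show ?thesis
  proof cases
    case 1
    then show ?thesis by (simp add: E1_nth)
  next
    case 2
    then show ?thesis by (simp add: E1_nth e_1)
  next
    case 3
    have "even m" "\<not> 4 dvd m + 1" "\<not> 4 dvd m - 1" "2 \<le> m" "m div 2 = 2 * k"
      using 3 by presburger+
    moreover have "e m = e (m div 2) + 1"
      using 3 e_even[of "2 * k"] by (simp add: \<open>m div 2 = 2 * k\<close>)
    ultimately show ?thesis
      using 3 by (simp add: E1_nth)
  next
    case 4
    have "odd m" "\<not> 4 dvd m + 1" "4 dvd m - 1" "2 \<le> m" "(m - 1) div 4 = k"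
      using 4 by presburger+
    moreover have "e m = e k + 1"
      using 4 e_4k_plus_1[of k] by simp
    ultimately show ?thesis
      using 4 by (simp add: E1_nth)
  next
    case 5
    have "even m" "\<not> 4 dvd m + 1" "\<not> 4 dvd m - 1" "2 \<le> m" "m div 2 = 2 * k + 1"
      using 5 by presburger+
    moreover have "e m = e (m div 2) + 1"
      using 5 e_even[of "2 * k + 1"] by (simp add: \<open>m div 2 = 2 * k + 1\<close>)
    ultimately show ?thesis
      by (simp add: E1_nth)
  next
    case 6
    have "odd m" "4 dvd m + 1" "\<not> 4 dvd m - 1" "2 \<le> m" "(m + 1) div 4 = k + 1"
      using 6 by presburger+
    moreover have "e m = e (k + 1) + 1"
      unfolding 6 by (rule e_4k_plus_3)
    ultimately show ?thesis
      by (simp add: E1_nth)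
  qed
qed

theorem mainTheorem17:
  shows "E1 = (E1 oo fps_X ^ 2)
             + (fps_X ^ 2 + 1) * ((E1 oo fps_X ^ 4) / fps_X)
             + fps_X ^ 2 / (1 - fps_X)"
  by (rule fps_ext) (simp only: functional_equation_rhs_nth, rule E1_coefficient_recurrence)

end
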